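(* There is a sentence $\alpha$ of ESG such that $\models_{\mathrm{ESG}}\alpha$ but not $\models_{\text{t-ESG}}\alpha$. In other words, validity in ESG of an ESG sentence does not imply its validity in t-ESG.
   Context: The logic t-ESG. Sorts object, action, clock, time; standard names $\mathcal N_O,\mathcal N_A,\mathcal N_C$ (countably infinite) and time names $\mathbb Q_{\ge0}$; variables of sorts object, action, clock; fluent and rigid function and predicate symbols (action- and clock-valued functions rigid); distinguished fluent predicates $\mathit{Poss}$, $\mathit{reset}$, $g$. Primitive terms/formulas: symbols applied to standard names. Situation formulas: $P(\vec t)$, $t_1=t_2$, $c\bowtie r$ ($c$ clock term), $r\bowtie r'$ ($r,r'\in\mathbb Q_{\ge0}$), closed under $\wedge,\neg,\forall$, $\square\alpha$, $[\delta]\alpha$, $[\![\delta]\!]\phi$, $[\![\delta]\!]^{<\infty}\phi$; trace formulas closed under $\wedge,\neg,\forall$, $\phi\,\mathcal U_I\,\psi$. Programs $\delta::=t\mid\alpha?\mid\delta_1;\delta_2\mid\delta_1|\delta_2\mid\delta_1\|\delta_2\mid\delta^*$ ($t$ action term, $\alpha$ static). Timed traces $t_1p_1t_2p_2\cdots$ with non-decreasing $t_i\in\mathbb R_{\ge0}$, $p_i\in\mathcal N_A$; $(p_1,t_1)\cdots(p_k,t_k)$ denotes $t_1p_1\cdots t_kp_k$; $\mathrm{time}(z)$ = time of last action ($0$ for $\langle\rangle$). A t-ESG world maps (primitive term, finite trace) to a name of the right sort, (primitive formula, finite trace) to $\{0,1\}$, (clock name, finite trace) to $\mathbb R_{\ge0}$,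 with rigidity, unique names for actions and clocks, $w[c,\langle\rangle]=0$, $w[c,z\cdot t]=w[c,z]+t-\mathrm{time}(z)$, $w[c,z\cdot p]=0$ if $w[\mathit{reset}(c),z\cdot p]=1$ else $w[c,z]$. Transitions given $w$: a time step $\langle z,\delta\rangle\to\langle z\cdot t,\delta\rangle$ ($t\ge\mathrm{time}(z)$ any real) followed by an action step, where $\langle z,a\rangle\to_s\langle z\cdot|a|^z_w,\top?\rangle$ and steps propagate through $;$ (into $\delta_2$ once $\delta_1$ final), $|$, $\|$, $^*$ in the standard way; final configurations: $\alpha?$ if $\alpha$ holds, $;$,$\|$ if both parts final, $|$ if one is, $\delta^*$ always. $\|\delta\|^z_w$: finite $z'$ reaching a final configuration, and infinite traces never visiting one. Truth: $w,z\models F(\vec t)$ iff $w[F(\vec n),z]=1$ ($\vec n$ the denotations); equality; $c\bowtie r$ iff $w[c,z]\bowtie r$; usual connectives and substitutional quantifiers; $\square\alpha$: after all finite extensions; $w,z\models[\delta]\alpha$ iff $w,zz'\models\alpha$ for all finite $z'\in\|\delta\|^z_w$; $[\![\delta]\!]\phi$ iff $w,z,\tau\models\phi$ for all $\tau\in\|\delta\|^z_w$; until: $\tau=z_1\tau'$, $z_1$ nonempty, $\psi$ at $(zz_1,\tau')$, $\mathrm{time}(z_1)\in\mathrm{time}(z)+I$, $\phi$ at all intermediate splits. $\models_{\text{t-ESG}}\alpha$: $w,\langle\rangle\models\alpha$ for every t-ESG world. The logic ESG. Language: t-ESG formulas mentioning only object and action terms (no clock terms, no $g$, no $\mathit{reset}$)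 and using only unbounded until. ESG traces are sequences of action names; an ESG world maps (primitive object/action term, finite ESG trace) to names and (primitive formula, finite ESG trace) to $\{0,1\}$, with rigidity and unique names for actions; transitions are the action steps only (no time steps); final configurations, program traces and truth are defined analogously without clocks. $\models_{\mathrm{ESG}}\alpha$: $w,\langle\rangle\models\alpha$ for all ESG worlds. *)

theory Defs
  imports Main "HOL.Real"
begin

section \<open>Syntax shared by t-ESG and ESG\<close>

datatype sort = SObj | SAct | SClk

datatype name = NObj nat | NAct nat | NClk nat

fun sort_name :: "name \<Rightarrow> sort" where
  "sort_name (NObj _) = SObj"
| "sort_name (NAct _) = SAct"
| "sort_name (NClk _) = SClk"

datatype fsym = FSym nat sort bool

fun fsort :: "fsym \<Rightarrow> sort" where "fsort (FSym _ s _) = s"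
fun frigid :: "fsym \<Rightarrow> bool" where "frigid (FSym _ _ r) = r"

datatype psym = Poss | Reset | G | PSym nat bool

fun prigid :: "psym \<Rightarrow> bool" where
  "prigid (PSym _ r) = r"
| "prigid _ = False"

datatype "term" = Var sort nat | Nm name | App fsym "term list"

fun term_sort :: "term \<Rightarrow> sort" where
  "term_sort (Var s _) = s"
| "term_sort (Nm n) = sort_name n"
| "term_sort (App f _) = fsort f"

datatype cmp = CLt | CLe | CEq | CGe | CGt

fun cmpv :: "cmp \<Rightarrow> real \<Rightarrow> real \<Rightarrow> bool" where
  "cmpv CLt x y = (x < y)"
| "cmpv CLe x y = (x \<le> y)"
| "cmpv CEq x y = (x = y)"
| "cmpv CGe x y = (x \<ge> y)"
| "cmpv CGt x y = (x > y)"

text \<open>Intervals with endpoints in rationals: lower bound, lower closed?,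
  upper bound (None = infinity), upper closed?\<close>
datatype interval = Intv rat bool "rat option" bool

fun in_intv :: "interval \<Rightarrow> real \<Rightarrow> bool" where
  "in_intv (Intv lo lc hi hc) x =
     ((if lc then of_rat lo \<le> x else of_rat lo < x) \<and>
      (case hi of None \<Rightarrow> True | Some h \<Rightarrow> (if hc then x \<le> of_rat h else x < of_rat h)))"

fun wf_intv :: "interval \<Rightarrow> bool" where
  "wf_intv (Intv lo lc hi hc) = (0 \<le> lo \<and> (case hi of None \<Rightarrow> True | Some h \<Rightarrow> 0 \<le> h))"

fun unbounded_intv :: "interval \<Rightarrow> bool" where
  "unbounded_intv (Intv lo lc hi hc) = (lo = 0 \<and> lc \<and> hi = None)"

datatype fml =
    Pred psym "term list"
  | Eq "term" "term"
  | ClkCmp "term" cmp rat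
  | RatCmp rat cmp rat
  | And fml fml
  | Not fml
  | All sort nat fml
  | Box fml
  | Dia prog fml                   \<comment> \<open>\<open>[\<delta>]\<alpha>\<close>\<close>
  | TBox prog tfml
  | TBoxFin prog tfml              \<comment> \<open>\<open>[[\<delta>]]^{<\<infinity>}\<phi>\<close>\<close>
and tfml =
    Sit fml
  | TAnd tfml tfml
  | TNot tfml
  | TAll sort nat tfml
  | Until interval tfml tfml
and prog =
    Act "term"
  | Test fml
  | Seq prog prog
  | Choice prog prog
  | Conc prog prog
  | Star prog

definition ftrue :: fml where "ftrue = Eq (Nm (NObj 0)) (Nm (NObj 0))"

fun tsorts :: "term \<Rightarrow> sort set" where
  "tsorts (Var s i) = {s}"
| "tsorts (Nm n) = {sort_name n}"
| "tsorts (App f ts) = insert (fsort f) (\<Union>t\<in>set ts. tsorts t)"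

fun fv_term :: "term \<Rightarrow> (sort \<times> nat) set" where
  "fv_term (Var s i) = {(s, i)}"
| "fv_term (Nm n) = {}"
| "fv_term (App f ts) = (\<Union>t\<in>set ts. fv_term t)"

fun fv_fml :: "fml \<Rightarrow> (sort \<times> nat) set"
and fv_tfml :: "tfml \<Rightarrow> (sort \<times> nat) set"
and fv_prog :: "prog \<Rightarrow> (sort \<times> nat) set" where
  "fv_fml (Pred p ts) = (\<Union>t\<in>set ts. fv_term t)"
| "fv_fml (Eq t1 t2) = fv_term t1 \<union> fv_term t2"
| "fv_fml (ClkCmp c cm r) = fv_term c"
| "fv_fml (RatCmp r cm r') = {}"
| "fv_fml (And a b) = fv_fml a \<union> fv_fml b"
| "fv_fml (Not a) = fv_fml a"
| "fv_fml (All s x a) = fv_fml a - {(s, x)}"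
| "fv_fml (Box a) = fv_fml a"
| "fv_fml (Dia d a) = fv_prog d \<union> fv_fml a"
| "fv_fml (TBox d p) = fv_prog d \<union> fv_tfml p"
| "fv_fml (TBoxFin d p) = fv_prog d \<union> fv_tfml p"
| "fv_tfml (Sit a) = fv_fml a"
| "fv_tfml (TAnd p q) = fv_tfml p \<union> fv_tfml q"
| "fv_tfml (TNot p) = fv_tfml p"
| "fv_tfml (TAll s x p) = fv_tfml p - {(s, x)}"
| "fv_tfml (Until I p q) = fv_tfml p \<union> fv_tfml q"
| "fv_prog (Act t) = fv_term t"
| "fv_prog (Test a) = fv_fml a"
| "fv_prog (Seq d1 d2) = fv_prog d1 \<union> fv_prog d2"
| "fv_prog (Choice d1 d2) = fv_prog d1 \<union> fv_prog d2"
| "fv_prog (Conc d1 d2) = fv_prog d1 \<union> fv_prog d2"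
| "fv_prog (Star d) = fv_prog d"

fun static :: "fml \<Rightarrow> bool" where
  "static (And a b) = (static a \<and> static b)"
| "static (Not a) = static a"
| "static (All s x a) = static a"
| "static (Box a) = False"
| "static (Dia d a) = False"
| "static (TBox d p) = False"
| "static (TBoxFin d p) = False"
| "static _ = True"

fun wf_fml :: "fml \<Rightarrow> bool"
and wf_tfml :: "tfml \<Rightarrow> bool"
and wf_prog :: "prog \<Rightarrow> bool" where
  "wf_fml (Pred p ts) = True"
| "wf_fml (Eq t1 t2) = True"
| "wf_fml (ClkCmp c cm r) = (term_sort c = SClk \<and> 0 \<le> r)"
| "wf_fml (RatCmp r cm r') = (0 \<le> r \<and> 0 \<le> r')"
| "wf_fml (And a b) = (wf_fml a \<and> wf_fml b)"
| "wf_fml (Not a) = wf_fml a"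
| "wf_fml (All s x a) = wf_fml a"
| "wf_fml (Box a) = wf_fml a"
| "wf_fml (Dia d a) = (wf_prog d \<and> wf_fml a)"
| "wf_fml (TBox d p) = (wf_prog d \<and> wf_tfml p)"
| "wf_fml (TBoxFin d p) = (wf_prog d \<and> wf_tfml p)"
| "wf_tfml (Sit a) = wf_fml a"
| "wf_tfml (TAnd p q) = (wf_tfml p \<and> wf_tfml q)"
| "wf_tfml (TNot p) = wf_tfml p"
| "wf_tfml (TAll s x p) = wf_tfml p"
| "wf_tfml (Until I p q) = (wf_intv I \<and> wf_tfml p \<and> wf_tfml q)"
| "wf_prog (Act t) = (term_sort t = SAct)"
| "wf_prog (Test a) = (static a \<and> wf_fml a)"
| "wf_prog (Seq d1 d2) = (wf_prog d1 \<and> wf_prog d2)"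
| "wf_prog (Choice d1 d2) = (wf_prog d1 \<and> wf_prog d2)"
| "wf_prog (Conc d1 d2) = (wf_prog d1 \<and> wf_prog d2)"
| "wf_prog (Star d) = wf_prog d"

fun esg_fml :: "fml \<Rightarrow> bool"
and esg_tfml :: "tfml \<Rightarrow> bool"
and esg_prog :: "prog \<Rightarrow> bool" where
  "esg_fml (Pred p ts) = (p \<noteq> Reset \<and> p \<noteq> G \<and> (\<forall>t\<in>set ts. SClk \<notin> tsorts t))"
| "esg_fml (Eq t1 t2) = (SClk \<notin> tsorts t1 \<and> SClk \<notin> tsorts t2)"
| "esg_fml (ClkCmp c cm r) = False"
| "esg_fml (RatCmp r cm r') = False"
| "esg_fml (And a b) = (esg_fml a \<and> esg_fml b)"
| "esg_fml (Not a) = esg_fml a"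
| "esg_fml (All s x a) = (s \<noteq> SClk \<and> esg_fml a)"
| "esg_fml (Box a) = esg_fml a"
| "esg_fml (Dia d a) = (esg_prog d \<and> esg_fml a)"
| "esg_fml (TBox d p) = (esg_prog d \<and> esg_tfml p)"
| "esg_fml (TBoxFin d p) = (esg_prog d \<and> esg_tfml p)"
| "esg_tfml (Sit a) = esg_fml a"
| "esg_tfml (TAnd p q) = (esg_tfml p \<and> esg_tfml q)"
| "esg_tfml (TNot p) = esg_tfml p"
| "esg_tfml (TAll s x p) = (s \<noteq> SClk \<and> esg_tfml p)"
| "esg_tfml (Until I p q) = (unbounded_intv I \<and> esg_tfml p \<and> esg_tfml q)"
| "esg_prog (Act t) = (SClk \<notin> tsorts t)"
| "esg_prog (Test a) = esg_fml a"
| "esg_prog (Seq d1 d2) = (esg_prog d1 \<and> esg_prog d2)"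
| "esg_prog (Choice d1 d2) = (esg_prog d1 \<and> esg_prog d2)"
| "esg_prog (Conc d1 d2) = (esg_prog d1 \<and> esg_prog d2)"
| "esg_prog (Star d) = esg_prog d"

definition esg_sentence :: "fml \<Rightarrow> bool" where
  "esg_sentence a \<longleftrightarrow> wf_fml a \<and> fv_fml a = {} \<and> esg_fml a"

section \<open>Traces and program semantics (generic in the trace-element type)\<close>

datatype 'e trace = Fin "'e list" | Inf "nat \<Rightarrow> 'e"

fun tappend :: "'e list \<Rightarrow> 'e trace \<Rightarrow> 'e trace" where
  "tappend z (Fin l) = Fin (z @ l)"
| "tappend z (Inf f) = Inf (\<lambda>i. if i < length z then z ! i else f (i - length z))"

definition itake :: "nat \<Rightarrow> (nat \<Rightarrow> 'e) \<Rightarrow> 'e list" where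
  "itake n f = map f [0..<n]"

text \<open>Final configurations, given the truth of (static) test formulas \<open>h z \<alpha>\<close>.\<close>
fun final :: "('e list \<Rightarrow> fml \<Rightarrow> bool) \<Rightarrow> 'e list \<Rightarrow> prog \<Rightarrow> bool" where
  "final h z (Act t) = False"
| "final h z (Test a) = h z a"
| "final h z (Seq d1 d2) = (final h z d1 \<and> final h z d2)"
| "final h z (Choice d1 d2) = (final h z d1 \<or> final h z d2)"
| "final h z (Conc d1 d2) = (final h z d1 \<and> final h z d2)"
| "final h z (Star d) = True"

text \<open>Action steps \<open>\<langle>z,\<delta>\<rangle> \<rightarrow>_s \<langle>z',\<delta>'\<rangle>\<close>; \<open>ev z t\<close> is the denotation of term \<open>t\<close>
  at \<open>z\<close>, \<open>mk\<close> turns an action name into a trace element.\<close>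
inductive step :: "('e list \<Rightarrow> term \<Rightarrow> name) \<Rightarrow> ('e list \<Rightarrow> fml \<Rightarrow> bool) \<Rightarrow> (name \<Rightarrow> 'e)
    \<Rightarrow> 'e list \<Rightarrow> prog \<Rightarrow> 'e list \<Rightarrow> prog \<Rightarrow> bool"
  for ev h mk where
  s_act: "step ev h mk z (Act t) (z @ [mk (ev z t)]) (Test ftrue)"
| s_seq1: "step ev h mk z d1 z' d1' \<Longrightarrow> step ev h mk z (Seq d1 d2) z' (Seq d1' d2)"
| s_seq2: "final h z d1 \<Longrightarrow> step ev h mk z d2 z' d2' \<Longrightarrow> step ev h mk z (Seq d1 d2) z' d2'"
| s_ch1: "step ev h mk z d1 z' d' \<Longrightarrow> step ev h mk z (Choice d1 d2) z' d'"
| s_ch2: "step ev h mk z d2 z' d' \<Longrightarrow> step ev h mk z (Choice d1 d2) z' d'"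
| s_conc1: "step ev h mk z d1 z' d1' \<Longrightarrow> step ev h mk z (Conc d1 d2) z' (Conc d1' d2)"
| s_conc2: "step ev h mk z d2 z' d2' \<Longrightarrow> step ev h mk z (Conc d1 d2) z' (Conc d1 d2')"
| s_star: "step ev h mk z d z' d' \<Longrightarrow> step ev h mk z (Star d) z' (Seq d' (Star d))"

text \<open>Valuations of variables (the semantics is substitutional; since every
  element is a standard name, a valuation of variables by names is used).\<close>
type_synonym env = "sort \<Rightarrow> nat \<Rightarrow> name"

definition env_ok :: "env \<Rightarrow> bool" where
  "env_ok e \<longleftrightarrow> (\<forall>s i. sort_name (e s i) = s)"

definition upd :: "env \<Rightarrow> sort \<Rightarrow> nat \<Rightarrow> name \<Rightarrow> env" where
  "upd e s x n = e(s := (e s)(x := n))"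

section \<open>t-ESG\<close>

datatype telem = TT real | TA name

fun tval :: "telem \<Rightarrow> real option" where
  "tval (TT t) = Some t"
| "tval (TA p) = None"

definition ttime :: "telem list \<Rightarrow> real" where
  "ttime z = (case List.map_filter tval z of [] \<Rightarrow> 0 | ts \<Rightarrow> last ts)"

text \<open>Finite timed traces \<open>t\<^sub>1 p\<^sub>1 t\<^sub>2 p\<^sub>2 \<dots>\<close> (possibly ending in a time point),
  times non-negative and non-decreasing, actions action names.\<close>
definition valid_tt :: "telem list \<Rightarrow> bool" where
  "valid_tt z \<longleftrightarrow>
     (\<forall>i<length z. (even i \<longrightarrow> (\<exists>t. z ! i = TT t \<and> 0 \<le> t)) \<and>
                   (odd i \<longrightarrow> (\<exists>p. z ! i = TA p \<and> sort_name p = SAct))) \<and>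
     sorted (List.map_filter tval z)"

record tworld =
  tw_fun :: "fsym \<Rightarrow> name list \<Rightarrow> telem list \<Rightarrow> name"
  tw_pred :: "psym \<Rightarrow> name list \<Rightarrow> telem list \<Rightarrow> bool"
  tw_clk :: "name \<Rightarrow> telem list \<Rightarrow> real"

definition is_tworld :: "tworld \<Rightarrow> bool" where
  "is_tworld w \<longleftrightarrow>
     (\<forall>f ns z. sort_name (tw_fun w f ns z) = fsort f) \<and>
     (\<forall>f ns z. (frigid f \<or> fsort f = SAct \<or> fsort f = SClk) \<longrightarrow> tw_fun w f ns z = tw_fun w f ns []) \<and>
     (\<forall>p ns z. prigid p \<longrightarrow> tw_pred w p ns z = tw_pred w p ns []) \<and>
     (\<forall>f g ns ms z. (fsort f = SAct \<or> fsort f = SClk) \<and> fsort g = fsort f \<and>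
         tw_fun w f ns z = tw_fun w g ms z \<longrightarrow> f = g \<and> ns = ms) \<and>
     (\<forall>c. tw_clk w c [] = 0) \<and>
     (\<forall>c z t. valid_tt (z @ [TT t]) \<longrightarrow> tw_clk w c (z @ [TT t]) = tw_clk w c z + t - ttime z) \<and>
     (\<forall>c z p. valid_tt (z @ [TA p]) \<longrightarrow>
         tw_clk w c (z @ [TA p]) = (if tw_pred w Reset [c] (z @ [TA p]) then 0 else tw_clk w c z)) \<and>
     (\<forall>c z. valid_tt z \<longrightarrow> 0 \<le> tw_clk w c z)"

fun teval :: "tworld \<Rightarrow> env \<Rightarrow> telem list \<Rightarrow> term \<Rightarrow> name" where
  "teval w e z (Var s i) = e s i"
| "teval w e z (Nm n) = n"
| "teval w e z (App f ts) = tw_fun w f (map (teval w e z) ts) z"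

fun tsat_st :: "tworld \<Rightarrow> env \<Rightarrow> telem list \<Rightarrow> fml \<Rightarrow> bool" where
  "tsat_st w e z (Pred p ts) = tw_pred w p (map (teval w e z) ts) z"
| "tsat_st w e z (Eq t1 t2) = (teval w e z t1 = teval w e z t2)"
| "tsat_st w e z (ClkCmp c cm r) = cmpv cm (tw_clk w (teval w e z c) z) (of_rat r)"
| "tsat_st w e z (RatCmp r cm r') = cmpv cm (of_rat r) (of_rat r')"
| "tsat_st w e z (And a b) = (tsat_st w e z a \<and> tsat_st w e z b)"
| "tsat_st w e z (Not a) = (\<not> tsat_st w e z a)"
| "tsat_st w e z (All s x a) = (\<forall>n. sort_name n = s \<longrightarrow> tsat_st w (upd e s x n) z a)"
| "tsat_st w e z _ = False"

definition ttrans :: "tworld \<Rightarrow> env \<Rightarrow> telem list \<times> prog \<Rightarrow> telem list \<times> prog \<Rightarrow> bool" where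
  "ttrans w e c c' \<longleftrightarrow> (\<exists>t. ttime (fst c) \<le> t \<and>
       step (teval w e) (tsat_st w e) TA (fst c @ [TT t]) (snd c) (fst c') (snd c'))"

definition tfin :: "tworld \<Rightarrow> env \<Rightarrow> telem list \<Rightarrow> prog \<Rightarrow> telem list \<Rightarrow> bool" where
  "tfin w e z d z' \<longleftrightarrow> (\<exists>d'. (ttrans w e)\<^sup>*\<^sup>* (z, d) (z @ z', d') \<and> final (tsat_st w e) (z @ z') d')"

definition tinf :: "tworld \<Rightarrow> env \<Rightarrow> telem list \<Rightarrow> prog \<Rightarrow> (nat \<Rightarrow> telem) \<Rightarrow> bool" where
  "tinf w e z d f \<longleftrightarrow> (\<exists>cs. cs 0 = d \<and>
      (\<forall>i. ttrans w e (z @ itake (2 * i) f, cs i) (z @ itake (2 * Suc i) f, cs (Suc i))) \<and>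
      (\<forall>i. \<not> final (tsat_st w e) (z @ itake (2 * i) f) (cs i)))"

definition tprog_traces :: "tworld \<Rightarrow> env \<Rightarrow> telem list \<Rightarrow> prog \<Rightarrow> telem trace set" where
  "tprog_traces w e z d = {Fin z' | z'. tfin w e z d z'} \<union> {Inf f | f. tinf w e z d f}"

fun tsat :: "tworld \<Rightarrow> env \<Rightarrow> telem list \<Rightarrow> fml \<Rightarrow> bool"
and ttsat :: "tworld \<Rightarrow> env \<Rightarrow> telem list \<Rightarrow> telem trace \<Rightarrow> tfml \<Rightarrow> bool" where
  "tsat w e z (Pred p ts) = tw_pred w p (map (teval w e z) ts) z"
| "tsat w e z (Eq t1 t2) = (teval w e z t1 = teval w e z t2)"
| "tsat w e z (ClkCmp c cm r) = cmpv cm (tw_clk w (teval w e z c) z) (of_rat r)"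
| "tsat w e z (RatCmp r cm r') = cmpv cm (of_rat r) (of_rat r')"
| "tsat w e z (And a b) = (tsat w e z a \<and> tsat w e z b)"
| "tsat w e z (Not a) = (\<not> tsat w e z a)"
| "tsat w e z (All s x a) = (\<forall>n. sort_name n = s \<longrightarrow> tsat w (upd e s x n) z a)"
| "tsat w e z (Box a) = (\<forall>z'. valid_tt (z @ z') \<longrightarrow> tsat w e (z @ z') a)"
| "tsat w e z (Dia d a) = (\<forall>z'. tfin w e z d z' \<longrightarrow> tsat w e (z @ z') a)"
| "tsat w e z (TBox d p) = (\<forall>\<tau>\<in>tprog_traces w e z d. ttsat w e z \<tau> p)"
| "tsat w e z (TBoxFin d p) = (\<forall>z'. tfin w e z d z' \<longrightarrow> ttsat w e z (Fin z') p)"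
| "ttsat w e z \<tau> (Sit a) = tsat w e z a"
| "ttsat w e z \<tau> (TAnd p q) = (ttsat w e z \<tau> p \<and> ttsat w e z \<tau> q)"
| "ttsat w e z \<tau> (TNot p) = (\<not> ttsat w e z \<tau> p)"
| "ttsat w e z \<tau> (TAll s x p) = (\<forall>n. sort_name n = s \<longrightarrow> ttsat w (upd e s x n) z \<tau> p)"
| "ttsat w e z \<tau> (Until I p q) =
     (\<exists>z1 \<tau>'. z1 \<noteq> [] \<and> \<tau> = tappend z1 \<tau>' \<and>
        in_intv I (ttime (z @ z1) - ttime z) \<and>
        ttsat w e (z @ z1) \<tau>' q \<and>
        (\<forall>z2 z3. z1 = z2 @ z3 \<and> z2 \<noteq> [] \<and> z3 \<noteq> [] \<longrightarrow> ttsat w e (z @ z2) (tappend z3 \<tau>') p))"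

definition tesg_valid :: "fml \<Rightarrow> bool" where
  "tesg_valid a \<longleftrightarrow> (\<forall>w e. is_tworld w \<and> env_ok e \<longrightarrow> tsat w e [] a)"

section \<open>ESG\<close>

definition valid_et :: "name list \<Rightarrow> bool" where
  "valid_et z \<longleftrightarrow> (\<forall>p\<in>set z. sort_name p = SAct)"

record eworld =
  ew_fun :: "fsym \<Rightarrow> name list \<Rightarrow> name list \<Rightarrow> name"
  ew_pred :: "psym \<Rightarrow> name list \<Rightarrow> name list \<Rightarrow> bool"

definition is_eworld :: "eworld \<Rightarrow> bool" where
  "is_eworld w \<longleftrightarrow>
     (\<forall>f ns z. sort_name (ew_fun w f ns z) = fsort f) \<and>
     (\<forall>f ns z. (frigid f \<or> fsort f = SAct) \<longrightarrow> ew_fun w f ns z = ew_fun w f ns []) \<and>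
     (\<forall>p ns z. prigid p \<longrightarrow> ew_pred w p ns z = ew_pred w p ns []) \<and>
     (\<forall>f g ns ms z. fsort f = SAct \<and> fsort g = SAct \<and>
         ew_fun w f ns z = ew_fun w g ms z \<longrightarrow> f = g \<and> ns = ms)"

fun eeval :: "eworld \<Rightarrow> env \<Rightarrow> name list \<Rightarrow> term \<Rightarrow> name" where
  "eeval w e z (Var s i) = e s i"
| "eeval w e z (Nm n) = n"
| "eeval w e z (App f ts) = ew_fun w f (map (eeval w e z) ts) z"

fun esat_st :: "eworld \<Rightarrow> env \<Rightarrow> name list \<Rightarrow> fml \<Rightarrow> bool" where
  "esat_st w e z (Pred p ts) = ew_pred w p (map (eeval w e z) ts) z"
| "esat_st w e z (Eq t1 t2) = (eeval w e z t1 = eeval w e z t2)"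
| "esat_st w e z (And a b) = (esat_st w e z a \<and> esat_st w e z b)"
| "esat_st w e z (Not a) = (\<not> esat_st w e z a)"
| "esat_st w e z (All s x a) = (\<forall>n. sort_name n = s \<longrightarrow> esat_st w (upd e s x n) z a)"
| "esat_st w e z _ = False"

definition etrans :: "eworld \<Rightarrow> env \<Rightarrow> name list \<times> prog \<Rightarrow> name list \<times> prog \<Rightarrow> bool" where
  "etrans w e c c' \<longleftrightarrow> step (eeval w e) (esat_st w e) id (fst c) (snd c) (fst c') (snd c')"

definition efin :: "eworld \<Rightarrow> env \<Rightarrow> name list \<Rightarrow> prog \<Rightarrow> name list \<Rightarrow> bool" where
  "efin w e z d z' \<longleftrightarrow> (\<exists>d'. (etrans w e)\<^sup>*\<^sup>* (z, d) (z @ z', d') \<and> final (esat_st w e) (z @ z') d')"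

definition einf :: "eworld \<Rightarrow> env \<Rightarrow> name list \<Rightarrow> prog \<Rightarrow> (nat \<Rightarrow> name) \<Rightarrow> bool" where
  "einf w e z d f \<longleftrightarrow> (\<exists>cs. cs 0 = d \<and>
      (\<forall>i. etrans w e (z @ itake i f, cs i) (z @ itake (Suc i) f, cs (Suc i))) \<and>
      (\<forall>i. \<not> final (esat_st w e) (z @ itake i f) (cs i)))"

definition eprog_traces :: "eworld \<Rightarrow> env \<Rightarrow> name list \<Rightarrow> prog \<Rightarrow> name trace set" where
  "eprog_traces w e z d = {Fin z' | z'. efin w e z d z'} \<union> {Inf f | f. einf w e z d f}"

fun esat :: "eworld \<Rightarrow> env \<Rightarrow> name list \<Rightarrow> fml \<Rightarrow> bool"
and etsat :: "eworld \<Rightarrow> env \<Rightarrow> name list \<Rightarrow> name trace \<Rightarrow> tfml \<Rightarrow> bool" where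
  "esat w e z (Pred p ts) = ew_pred w p (map (eeval w e z) ts) z"
| "esat w e z (Eq t1 t2) = (eeval w e z t1 = eeval w e z t2)"
| "esat w e z (ClkCmp c cm r) = False"
| "esat w e z (RatCmp r cm r') = False"
| "esat w e z (And a b) = (esat w e z a \<and> esat w e z b)"
| "esat w e z (Not a) = (\<not> esat w e z a)"
| "esat w e z (All s x a) = (\<forall>n. sort_name n = s \<longrightarrow> esat w (upd e s x n) z a)"
| "esat w e z (Box a) = (\<forall>z'. valid_et z' \<longrightarrow> esat w e (z @ z') a)"
| "esat w e z (Dia d a) = (\<forall>z'. efin w e z d z' \<longrightarrow> esat w e (z @ z') a)"
| "esat w e z (TBox d p) = (\<forall>\<tau>\<in>eprog_traces w e z d. etsat w e z \<tau> p)"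
| "esat w e z (TBoxFin d p) = (\<forall>z'. efin w e z d z' \<longrightarrow> etsat w e z (Fin z') p)"
| "etsat w e z \<tau> (Sit a) = esat w e z a"
| "etsat w e z \<tau> (TAnd p q) = (etsat w e z \<tau> p \<and> etsat w e z \<tau> q)"
| "etsat w e z \<tau> (TNot p) = (\<not> etsat w e z \<tau> p)"
| "etsat w e z \<tau> (TAll s x p) = (\<forall>n. sort_name n = s \<longrightarrow> etsat w (upd e s x n) z \<tau> p)"
| "etsat w e z \<tau> (Until I p q) =
     (\<exists>z1 \<tau>'. z1 \<noteq> [] \<and> \<tau> = tappend z1 \<tau>' \<and>
        etsat w e (z @ z1) \<tau>' q \<and>
        (\<forall>z2 z3. z1 = z2 @ z3 \<and> z2 \<noteq> [] \<and> z3 \<noteq> [] \<longrightarrow> etsat w e (z @ z2) (tappend z3 \<tau>') p))"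

definition esg_valid :: "fml \<Rightarrow> bool" where
  "esg_valid a \<longleftrightarrow> (\<forall>w e. is_eworld w \<and> env_ok e \<longrightarrow> esat w e [] a)"

end

theory Submission
  imports Defs "HOL-Library.Countable"
begin

(* In t-ESG every action is preceded by a time step of its own, so a primitive action a
   contributes the two trace elements t and a, whereas in ESG it contributes only a.
   The sentence [[a]] \<not>(\<top> U (\<top> U \<top>)) says that no trace of the program a splits
   into two nonempty consecutive segments: it is valid in ESG, but the t-ESG trace 0 a
   refutes it in any world. *)

definition ttrue :: tfml where
  "ttrue = Sit ftrue"

definition always_intv :: interval where
  "always_intv = Intv 0 True None True"

definition at_least_two_steps :: tfml where
  "at_least_two_steps = Until always_intv ttrue (Until always_intv ttrue ttrue)"

definition one_step_sentence :: fml where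
  "one_step_sentence = TBox (Act (Nm (NAct 0))) (TNot at_least_two_steps)"

lemma esg_sentence_one_step_sentence: "esg_sentence one_step_sentence"
  by (simp add: esg_sentence_def one_step_sentence_def at_least_two_steps_def ttrue_def
      always_intv_def ftrue_def)

lemma step_Test_False: "\<not> step ev h mk z (Test a) z' d'"
  by (auto elim: step.cases)

lemma step_ActD: "step ev h mk z (Act t) z' d' \<Longrightarrow> z' = z @ [mk (ev z t)] \<and> d' = Test ftrue"
  by (auto elim: step.cases)

lemma rtranclp_etrans_Test: "(etrans w e)\<^sup>*\<^sup>* (z, Test a) c \<Longrightarrow> c = (z, Test a)"
  by (erule converse_rtranclpE) (auto simp: etrans_def step_Test_False)

lemma efin_Act: "efin w e z (Act t) z' \<Longrightarrow> z' = [eeval w e z t]"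
proof -
  assume "efin w e z (Act t) z'"
  then obtain d' where run: "(etrans w e)\<^sup>*\<^sup>* (z, Act t) (z @ z', d')"
    and fin: "final (esat_st w e) (z @ z') d'"
    unfolding efin_def by blast
  from run show ?thesis
  proof (cases rule: converse_rtranclpE)
    case base
    with fin show ?thesis by auto
  next
    case (step c)
    then have "c = (z @ [eeval w e z t], Test ftrue)"
      by (cases c) (auto simp: etrans_def dest: step_ActD)
    with step(2) show ?thesis
      by (auto dest: rtranclp_etrans_Test)
  qed
qed

lemma not_einf_Act: "\<not> einf w e z (Act t) f"
proof
  assume "einf w e z (Act t) f"
  then obtain cs where "cs 0 = Act t"
    and run: "\<And>i. etrans w e (z @ itake i f, cs i) (z @ itake (Suc i) f, cs (Suc i))"
    unfolding einf_def by blast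
  with run[of 0] have "cs 1 = Test ftrue"
    by (auto simp: etrans_def dest: step_ActD)
  with run[of 1] show False
    by (simp add: etrans_def step_Test_False)
qed

lemma eprog_traces_ActD: "\<tau> \<in> eprog_traces w e z (Act t) \<Longrightarrow> \<tau> = Fin [eeval w e z t]"
  by (auto simp: eprog_traces_def not_einf_Act dest: efin_Act)

lemma etsat_Until_FinD:
  assumes "etsat w e z (Fin l) (Until I p q)"
  shows "\<exists>z1 l'. z1 \<noteq> [] \<and> l = z1 @ l' \<and> etsat w e (z @ z1) (Fin l') q"
proof -
  from assms obtain z1 \<tau>' where "z1 \<noteq> []" "Fin l = tappend z1 \<tau>'"
    and "etsat w e (z @ z1) \<tau>' q"
    by auto
  then show ?thesis
    by (cases \<tau>') auto
qed

lemma etsat_Until_Until_length: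
  assumes "etsat w e z (Fin l) (Until I p (Until J q r))"
  shows "2 \<le> length l"
proof -
  obtain z1 l' where "z1 \<noteq> []" "l = z1 @ l'"
    and inner: "etsat w e (z @ z1) (Fin l') (Until J q r)"
    using etsat_Until_FinD[OF assms] by blast
  moreover obtain z1' l'' where "z1' \<noteq> []" "l' = z1' @ l''"
    using etsat_Until_FinD[OF inner] by blast
  ultimately show ?thesis
    by (simp add: Suc_le_eq length_greater_0_conv[symmetric] del: length_greater_0_conv)
qed

lemma esg_valid_one_step_sentence: "esg_valid one_step_sentence"
  unfolding esg_valid_def one_step_sentence_def at_least_two_steps_def
proof (intro allI impI, simp only: esat.simps, intro ballI)
  fix w e \<tau>
  assume "\<tau> \<in> eprog_traces w e [] (Act (Nm (NAct 0)))"
  then have "\<tau> = Fin [NAct 0]"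
    by (auto dest: eprog_traces_ActD)
  moreover have "\<not> etsat w e [] (Fin [NAct 0]) (Until always_intv ttrue (Until always_intv ttrue ttrue))"
  proof
    assume "etsat w e [] (Fin [NAct 0]) (Until always_intv ttrue (Until always_intv ttrue ttrue))"
    from etsat_Until_Until_length[OF this] show False
      by simp
  qed
  ultimately show "etsat w e [] \<tau> (TNot (Until always_intv ttrue (Until always_intv ttrue ttrue)))"
    by (simp only: etsat.simps simp_thms)
qed

lemma ttime_Nil [simp]: "ttime [] = 0"
  by (simp add: ttime_def)

lemma ttime_snoc_TT [simp]: "ttime (z @ [TT t]) = t"
  by (simp add: ttime_def List.map_filter_def list.case_eq_if)

lemma ttime_snoc_TA [simp]: "ttime (z @ [TA p]) = ttime z"
  by (simp add: ttime_def List.map_filter_def)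

lemma valid_tt_TT_nonneg:
  assumes "valid_tt z" and "TT t \<in> set z"
  shows "0 \<le> t"
proof -
  from assms(2) obtain i where "i < length z" and "z ! i = TT t"
    by (auto simp: in_set_conv_nth)
  with assms(1) show ?thesis
    unfolding valid_tt_def by (cases "even i") fastforce+
qed

lemma ttime_zero_or_mem: "ttime z = 0 \<or> TT (ttime z) \<in> set z"
proof (induction z rule: rev_induct)
  case (snoc x z)
  then show ?case
    by (cases x) auto
qed simp

lemma ttime_nonneg: "valid_tt z \<Longrightarrow> 0 \<le> ttime z"
  by (metis ttime_zero_or_mem valid_tt_TT_nonneg order_refl)

lemma tprog_traces_ActI:
  assumes "ttime z \<le> u"
  shows "Fin [TT u, TA (teval w e (z @ [TT u]) t)] \<in> tprog_traces w e z (Act t)"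
proof -
  have "ttrans w e (z, Act t) (z @ [TT u, TA (teval w e (z @ [TT u]) t)], Test ftrue)"
    using assms step.s_act[of "teval w e" "tsat_st w e" TA "z @ [TT u]" t]
    unfolding ttrans_def by auto
  moreover have "final (tsat_st w e) (z @ [TT u, TA (teval w e (z @ [TT u]) t)]) (Test ftrue)"
    by (simp add: ftrue_def)
  ultimately show ?thesis
    unfolding tprog_traces_def tfin_def by auto
qed

lemma ttsat_Until_ConsI:
  assumes "in_intv I (ttime (z @ [x]) - ttime z)" and "ttsat w e (z @ [x]) (Fin l) q"
  shows "ttsat w e z (Fin (x # l)) (Until I p q)"
proof -
  have no_split: "\<not> ([x] = z2 @ z3 \<and> z2 \<noteq> [] \<and> z3 \<noteq> [])" for z2 z3 :: "telem list"
    by (cases z2) auto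
  show ?thesis
    unfolding ttsat.simps
    using assms no_split by (intro exI[of _ "[x]"] exI[of _ "Fin l"]) auto
qed

lemma ttsat_at_least_two_steps:
  assumes "ttime z \<le> u"
  shows "ttsat w e z (Fin [TT u, TA p]) at_least_two_steps"
  unfolding at_least_two_steps_def
proof (intro ttsat_Until_ConsI)
  show "in_intv always_intv (ttime (z @ [TT u]) - ttime z)"
    using assms by (simp add: always_intv_def)
  show "in_intv always_intv (ttime ((z @ [TT u]) @ [TA p]) - ttime (z @ [TT u]))"
    by (simp only: ttime_snoc_TA) (simp add: always_intv_def)
  show "ttsat w e ((z @ [TT u]) @ [TA p]) (Fin []) ttrue"
    by (simp add: ttrue_def ftrue_def)
qed

instance sort :: countable by countable_datatype
instance name :: countable by countable_datatype
instance fsym :: countable by countable_datatype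

fun std_name :: "sort \<Rightarrow> nat \<Rightarrow> name" where
  "std_name SObj = NObj"
| "std_name SAct = NAct"
| "std_name SClk = NClk"

lemma sort_name_std_name [simp]: "sort_name (std_name s n) = s"
  by (cases s) simp_all

lemma std_name_eq_iff [simp]: "std_name s n = std_name s m \<longleftrightarrow> n = m"
  by (cases s) simp_all

definition std_env :: env where
  "std_env s i = std_name s 0"

lemma env_ok_std_env: "env_ok std_env"
  by (simp add: env_ok_def std_env_def)

(* Function values are injective codes, as unique names for actions and clocks demand;
   since no fluent holds, no clock is ever reset, so every clock shows the elapsed time. *)
definition free_tworld :: tworld where
  "free_tworld =
     \<lparr>tw_fun = (\<lambda>f ns z. std_name (fsort f) (to_nat (f, ns))),
      tw_pred = (\<lambda>p ns z. False),
      tw_clk = (\<lambda>c z. ttime z)\<rparr>"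

lemma is_tworld_free_tworld: "is_tworld free_tworld"
  by (auto simp: is_tworld_def free_tworld_def ttime_nonneg dest: injD[OF inj_to_nat])

lemma not_tesg_valid_one_step_sentence: "\<not> tesg_valid one_step_sentence"
proof
  assume "tesg_valid one_step_sentence"
  then have "tsat free_tworld std_env [] one_step_sentence"
    unfolding tesg_valid_def using is_tworld_free_tworld env_ok_std_env by blast
  moreover have "Fin [TT 0, TA (NAct 0)] \<in> tprog_traces free_tworld std_env [] (Act (Nm (NAct 0)))"
    using tprog_traces_ActI[of "[]" 0 free_tworld std_env "Nm (NAct 0)"] by simp
  moreover have "ttsat free_tworld std_env [] (Fin [TT 0, TA (NAct 0)]) at_least_two_steps"
    by (rule ttsat_at_least_two_steps) simp
  ultimately show False
    unfolding one_step_sentence_def by (simp only: tsat.simps ttsat.simps)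
qed

theorem mainTheorem6:
  shows "\<exists>\<alpha>. esg_sentence \<alpha> \<and> esg_valid \<alpha> \<and> \<not> tesg_valid \<alpha>"
  using esg_sentence_one_step_sentence esg_valid_one_step_sentence
    not_tesg_valid_one_step_sentence by blast

end
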